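(* For every choice of parameters for which the diffusion admits an invariant probability measure $\mu_\star$, one has $\int_{\mathbb R^4}\exp(\beta H(x))\,\mu_\star(dx)=\infty$ for every $\beta>1/T$.
   Context: Fix $\alpha,\gamma,T,T_\infty>0$, $k\in\mathbb R$, and an even $C^2$ function $V_1$ with $V_1(x)=\frac{|x|^{2k}}{2k}+R_1(x)$ (for $k=0$: $V_1=c+R_1$), $\sup_{|x|>1}\max_{m\le2}|R_1^{(m)}(x)|/|x|^{2k-1-m}<\infty$. On $\mathbb R^4\ni x=(p_0,q_0,p_1,q_1)$, $H=\frac{p_0^2+p_1^2}2+V_1(q_0)+V_1(q_1)+\frac\alpha2(q_0-q_1)^2$. The diffusion is $dq_i=p_idt$, $dp_0=-V_1'(q_0)dt+\alpha(q_1-q_0)dt-\gamma p_0dt+\sqrt{2\gamma T}dw_0$, $dp_1=-V_1'(q_1)dt+\alpha(q_0-q_1)dt+\sqrt{2\gamma T_\infty}dw_1$, $w_0,w_1$ independent Brownian motions. *)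

theory Defs
  imports "HOL-Analysis.Analysis" "HOL-Probability.Probability"
begin

text \<open>State space R^4 with coordinates x = (p0, q0, p1, q1).\<close>
type_synonym state = "real \<times> real \<times> real \<times> real"

definition e_p0 :: state where "e_p0 = (1, 0, 0, 0)"
definition e_q0 :: state where "e_q0 = (0, 1, 0, 0)"
definition e_p1 :: state where "e_p1 = (0, 0, 1, 0)"
definition e_q1 :: state where "e_q1 = (0, 0, 0, 1)"

definition coord_dirs :: "state set" where
  "coord_dirs = {e_p0, e_q0, e_p1, e_q1}"

definition pd :: "(state \<Rightarrow> real) \<Rightarrow> state \<Rightarrow> state \<Rightarrow> real" where
  "pd f v x = deriv (\<lambda>t. f (x + t *\<^sub>R v)) 0"

definition has_pd :: "(state \<Rightarrow> real) \<Rightarrow> bool" where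
  "has_pd f \<longleftrightarrow> (\<forall>v\<in>coord_dirs. \<forall>x.
      ((\<lambda>t. f (x + t *\<^sub>R v)) has_real_derivative pd f v x) (at 0))"

definition C2_R4 :: "(state \<Rightarrow> real) \<Rightarrow> bool" where
  "C2_R4 f \<longleftrightarrow> continuous_on UNIV f \<and> has_pd f \<and>
     (\<forall>v\<in>coord_dirs. continuous_on UNIV (pd f v) \<and> has_pd (pd f v) \<and>
        (\<forall>w\<in>coord_dirs. continuous_on UNIV (pd (pd f v) w)))"

definition test_fun :: "(state \<Rightarrow> real) \<Rightarrow> bool" where
  "test_fun f \<longleftrightarrow> C2_R4 f \<and> compact (closure {x. f x \<noteq> 0})"

definition C2_real :: "(real \<Rightarrow> real) \<Rightarrow> bool" where
  "C2_real V \<longleftrightarrow> (\<forall>x. V differentiable (at x)) \<and> (\<forall>x. deriv V differentiable (at x))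
     \<and> continuous_on UNIV (deriv (deriv V))"

definition admissible_V1 :: "real \<Rightarrow> (real \<Rightarrow> real) \<Rightarrow> bool" where
  "admissible_V1 k V1 \<longleftrightarrow> C2_real V1 \<and> (\<forall>x. V1 (- x) = V1 x) \<and>
     (\<exists>c B. let R1 = (\<lambda>x. V1 x - (if k = 0 then c else \<bar>x\<bar> powr (2*k) / (2*k)))
      in \<forall>x. \<bar>x\<bar> > 1 \<longrightarrow> (\<forall>m::nat. m \<le> 2 \<longrightarrow>
            \<bar>(deriv ^^ m) R1 x\<bar> \<le> B * \<bar>x\<bar> powr (2*k - 1 - real m)))"

definition Ham :: "real \<Rightarrow> (real \<Rightarrow> real) \<Rightarrow> state \<Rightarrow> real" where
  "Ham \<alpha> V1 x = (case x of (p0, q0, p1, q1) \<Rightarrow>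
     (p0^2 + p1^2) / 2 + V1 q0 + V1 q1 + \<alpha> / 2 * (q0 - q1)^2)"

definition gen :: "real \<Rightarrow> real \<Rightarrow> real \<Rightarrow> real \<Rightarrow> (real \<Rightarrow> real) \<Rightarrow> (state \<Rightarrow> real) \<Rightarrow> state \<Rightarrow> real" where
  "gen \<alpha> \<gamma> T Tinf V1 f x = (case x of (p0, q0, p1, q1) \<Rightarrow>
       p0 * pd f e_q0 x + p1 * pd f e_q1 x
     + (- deriv V1 q0 + \<alpha> * (q1 - q0) - \<gamma> * p0) * pd f e_p0 x
     + (- deriv V1 q1 + \<alpha> * (q0 - q1)) * pd f e_p1 x
     + \<gamma> * T * pd (pd f e_p0) e_p0 x
     + \<gamma> * Tinf * pd (pd f e_p1) e_p1 x)"

text \<open>Invariant probability measure (in the infinitesimal / weak Fokker-Planck sense).\<close>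
definition invariant_prob :: "real \<Rightarrow> real \<Rightarrow> real \<Rightarrow> real \<Rightarrow> (real \<Rightarrow> real) \<Rightarrow> state measure \<Rightarrow> bool" where
  "invariant_prob \<alpha> \<gamma> T Tinf V1 M \<longleftrightarrow> prob_space M \<and> sets M = sets borel \<and>
     (\<forall>f. test_fun f \<longrightarrow> integrable M (gen \<alpha> \<gamma> T Tinf V1 f) \<and>
          (\<integral>x. gen \<alpha> \<gamma> T Tinf V1 f x \<partial>M) = 0)"

end

theory Submission
  imports Defs "HOL-Real_Asymp.Real_Asymp"
begin

text \<open>Suppose \<open>\<integral> exp(\<beta> H) d\<mu> < \<infinity>\<close> with \<open>\<beta> > 1/T\<close>, and put \<open>b = 1/T\<close>. Invariance gives \<open>\<integral> L f d\<mu> = 0\<close>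
  for \<open>f = exp(b H) \<rho>(H - n) \<rho>(|q|\<^sup>2/r - 1)\<close>, where \<open>\<rho>\<close> is a smooth step from 1 down to 0. Since
  \<open>b T \<ge> 1\<close>, \<open>L exp(b H) \<ge> b \<gamma> (T + T\<^sub>\<infinity>) exp(b H)\<close>, which is at least a constant \<open>c > 0\<close> because \<open>H\<close> is
  bounded below. Hence \<open>L f \<ge> c\<close> except where \<open>H > n\<close>, where \<open>|q|\<^sup>2 > r\<close>, or where the position
  cut-off varies. The contributions of these sets are bounded by a polynomial in \<open>n\<close> times
  \<open>exp((b - \<beta>) n) \<integral> exp(\<beta> H) d\<mu>\<close>, by \<open>c \<mu>(|q|\<^sup>2 > r)\<close>, and by \<open>O(1/\<surd>r)\<close>; choosing first \<open>n\<close> and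
  then \<open>r\<close> large makes \<open>\<integral> L f d\<mu>\<close> positive.\<close>

subsection \<open>A smooth step function\<close>

lemma DERIV_glue:
  fixes f g h :: "real \<Rightarrow> real"
  assumes "DERIV g a :> D" "DERIV h a :> D" "d > 0"
    and "\<And>x. a - d < x \<Longrightarrow> x \<le> a \<Longrightarrow> f x = g x"
    and "\<And>x. a \<le> x \<Longrightarrow> x < a + d \<Longrightarrow> f x = h x"
  shows "DERIV f a :> D"
proof -
  have left: "(f has_field_derivative D) (at a within {..a})"
    by (rule has_field_derivative_transform_within[of g D a "{..a}" d])
       (use assms in \<open>auto intro: has_field_derivative_at_within simp: dist_real_def\<close>)
  have right: "(f has_field_derivative D) (at a within {a..})"
    by (rule has_field_derivative_transform_within[of h D a "{a..}" d])
       (use assms in \<open>auto intro: has_field_derivative_at_within simp: dist_real_def\<close>)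
  have "{..a} \<union> {a..} = UNIV" by auto
  then have "at a = sup (at a within {..a}) (at a within {a..})"
    using at_within_union[of a "{..a}" "{a..}"] by simp
  then show ?thesis
    using left right unfolding has_field_derivative_iff by (simp add: filterlim_sup)
qed

lemma DERIV_clamped:
  fixes F F' P P' :: "real \<Rightarrow> real"
  assumes F: "\<And>s. F s = (if s \<le> 0 then P 0 else if 1 \<le> s then P 1 else P s)"
    and F': "\<And>s. F' s = (if s \<le> 0 then 0 else if 1 \<le> s then 0 else P' s)"
    and P: "\<And>s. DERIV P s :> P' s" and P'0: "P' 0 = 0" and P'1: "P' 1 = 0"
  shows "DERIV F s :> F' s"
proof -
  consider "s < 0" | "s = 0" | "0 < s \<and> s < 1" | "s = 1" | "s > 1" by linarith
  then show ?thesis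
  proof cases
    case 1
    show ?thesis
      by (rule has_field_derivative_transform_within_open[of "\<lambda>_. P 0" _ s "{..<0}"])
         (use 1 in \<open>auto simp: F F'\<close>)
  next
    case 2
    show ?thesis
      by (rule DERIV_glue[where g="\<lambda>_. P 0" and h=P and d=1]) (use 2 P[of 0] P'0 in \<open>auto simp: F F'\<close>)
  next
    case 3
    show ?thesis
      by (rule has_field_derivative_transform_within_open[of P _ s "{0<..<1}"])
         (use 3 P in \<open>auto simp: F F'\<close>)
  next
    case 4
    show ?thesis
      by (rule DERIV_glue[where g=P and h="\<lambda>_. P 1" and d=1]) (use 4 P[of 1] P'1 in \<open>auto simp: F F'\<close>)
  next
    case 5
    show ?thesis
      by (rule has_field_derivative_transform_within_open[of "\<lambda>_. P 1" _ s "{1<..}"])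
         (use 5 in \<open>auto simp: F F'\<close>)
  qed
qed

definition smoothstep :: "real \<Rightarrow> real" where
  "smoothstep s = (if s \<le> 0 then 1 else if 1 \<le> s then 0 else 1 - 10 * s^3 + 15 * s^4 - 6 * s^5)"

definition smoothstep_d1 :: "real \<Rightarrow> real" where
  "smoothstep_d1 s = (if s \<le> 0 then 0 else if 1 \<le> s then 0 else - 30 * s^2 + 60 * s^3 - 30 * s^4)"

definition smoothstep_d2 :: "real \<Rightarrow> real" where
  "smoothstep_d2 s = (if s \<le> 0 then 0 else if 1 \<le> s then 0 else - 60 * s + 180 * s^2 - 120 * s^3)"

lemma DERIV_smoothstep: "DERIV smoothstep s :> smoothstep_d1 s"
  by (rule DERIV_clamped[OF _ smoothstep_d1_def, where P="\<lambda>s. 1 - 10 * s^3 + 15 * s^4 - 6 * s^5"])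
     (auto intro!: derivative_eq_intros simp: smoothstep_def algebra_simps)

lemma DERIV_smoothstep_d1: "DERIV smoothstep_d1 s :> smoothstep_d2 s"
  by (rule DERIV_clamped[OF _ smoothstep_d2_def, where P="\<lambda>s. - 30 * s^2 + 60 * s^3 - 30 * s^4"])
     (auto intro!: derivative_eq_intros simp: smoothstep_d1_def algebra_simps)

lemma continuous_on_smoothstep_d2: "continuous_on UNIV smoothstep_d2"
proof -
  have eq: "smoothstep_d2 = (\<lambda>s. (\<lambda>t. - 60 * t + 180 * t^2 - 120 * t^3) (min 1 (max 0 s)))"
    by (auto simp: smoothstep_d2_def fun_eq_iff)
  show ?thesis unfolding eq by (intro continuous_intros)
qed

lemma smoothstep_nonneg: "0 \<le> smoothstep s"
proof -
  have "1 - 10 * s^3 + 15 * s^4 - 6 * s^5 = (1 - s)^3 * (1 + 3 * s + 6 * s^2)"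
    by (simp add: algebra_simps power2_eq_square power3_eq_cube power_numeral_reduce)
  then show ?thesis
    by (simp add: smoothstep_def)
qed

lemma smoothstep_le_one: "smoothstep s \<le> 1"
proof -
  have "0 \<le> 10 * s^3 - 15 * s^4 + 6 * s^5" if "0 < s"
  proof -
    have "0 \<le> s^3 * (6 * (s - 5/4)^2 + 5/8)" using that by simp
    also have "\<dots> = 10 * s^3 - 15 * s^4 + 6 * s^5"
      by (simp add: algebra_simps power2_eq_square power3_eq_cube power_numeral_reduce)
    finally show ?thesis .
  qed
  then show ?thesis
    by (auto simp: smoothstep_def)
qed

lemma smoothstep_eq_one: "s \<le> 0 \<Longrightarrow> smoothstep s = 1"
  and smoothstep_eq_zero: "1 \<le> s \<Longrightarrow> smoothstep s = 0"
  and smoothstep_d1_eq_zero: "s \<le> 0 \<or> 1 \<le> s \<Longrightarrow> smoothstep_d1 s = 0"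
  and smoothstep_d2_eq_zero: "s \<le> 0 \<or> 1 \<le> s \<Longrightarrow> smoothstep_d2 s = 0"
  by (auto simp: smoothstep_def smoothstep_d1_def smoothstep_d2_def)

text \<open>Crude bounds: each monomial is bounded by its coefficient on \<open>[0, 1]\<close>.\<close>

lemma abs_smoothstep_d1_le: "\<bar>smoothstep_d1 s\<bar> \<le> 360"
proof -
  have "\<bar>- 30 * s^2 + 60 * s^3 - 30 * s^4\<bar> \<le> 360" if "0 < s" "s < 1"
    using that power_le_one[of s 2] power_le_one[of s 3] power_le_one[of s 4]
      zero_le_power[of s 2] zero_le_power[of s 3] zero_le_power[of s 4]
    by (simp add: abs_le_iff; linarith)
  then show ?thesis by (auto simp: smoothstep_d1_def)
qed

lemma abs_smoothstep_d2_le: "\<bar>smoothstep_d2 s\<bar> \<le> 360"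
proof -
  have "\<bar>- 60 * s + 180 * s^2 - 120 * s^3\<bar> \<le> 360" if "0 < s" "s < 1"
    using that power_le_one[of s 2] power_le_one[of s 3] zero_le_power[of s 2] zero_le_power[of s 3]
    by (simp add: abs_le_iff; linarith)
  then show ?thesis by (auto simp: smoothstep_d2_def)
qed

subsection \<open>Twice continuously differentiable functions\<close>

definition has_C2_derivatives ::
    "('a::real_normed_vector \<Rightarrow> real) \<Rightarrow> ('a \<Rightarrow> 'a \<Rightarrow> real) \<Rightarrow> ('a \<Rightarrow> 'a \<Rightarrow> 'a \<Rightarrow> real) \<Rightarrow> bool" where
  "has_C2_derivatives g g' g'' \<longleftrightarrow>
     (\<forall>x. (g has_derivative g' x) (at x)) \<and>
     (\<forall>x h. ((\<lambda>y. g' y h) has_derivative g'' x h) (at x)) \<and>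
     (\<forall>h k. continuous_on UNIV (\<lambda>x. g'' x h k))"

lemma has_derivative_imp_line_derivative:
  assumes "(g has_derivative L) (at x)"
  shows "((\<lambda>t. g (x + t *\<^sub>R v)) has_real_derivative L v) (at 0)"
proof -
  have "((\<lambda>t::real. x + t *\<^sub>R v) has_derivative (\<lambda>t. t *\<^sub>R v)) (at 0)"
    by (auto intro!: derivative_eq_intros)
  from has_derivative_compose[OF this, of g L] assms
  have "((\<lambda>t. g (x + t *\<^sub>R v)) has_derivative (\<lambda>t. L (t *\<^sub>R v))) (at 0)" by simp
  moreover have "(\<lambda>t. L (t *\<^sub>R v)) = (\<lambda>t. L v * t)"
    using linear_cmul[OF has_derivative_linear[OF assms]] by (auto simp: fun_eq_iff)
  ultimately show ?thesis unfolding has_field_derivative_def by simp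
qed

lemma has_C2_derivatives_pd:
  "has_C2_derivatives g g' g'' \<Longrightarrow> pd g v = (\<lambda>x. g' x v)"
  unfolding pd_def has_C2_derivatives_def
  by (intro ext DERIV_imp_deriv has_derivative_imp_line_derivative) blast

lemma has_C2_derivatives_pd_pd:
  assumes "has_C2_derivatives g g' g''"
  shows "pd (\<lambda>x. g' x v) w = (\<lambda>x. g'' x v w)"
proof
  fix x
  have "((\<lambda>t. g' (x + t *\<^sub>R w) v) has_real_derivative g'' x v w) (at 0)"
    using assms has_derivative_imp_line_derivative[of "\<lambda>y. g' y v" "g'' x v" x w]
    unfolding has_C2_derivatives_def by blast
  then show "pd (\<lambda>x. g' x v) w x = g'' x v w"
    unfolding pd_def by (rule DERIV_imp_deriv)
qed

lemma has_C2_derivatives_continuous_on: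
  assumes "has_C2_derivatives g g' g''"
  shows "continuous_on UNIV g" and "continuous_on UNIV (\<lambda>x. g' x h)"
  using assms unfolding has_C2_derivatives_def
  by (metis has_derivative_continuous_on)+

lemma has_C2_derivatives_imp_C2_R4:
  assumes "has_C2_derivatives g g' g''"
  shows "C2_R4 g"
proof -
  note pd1 = has_C2_derivatives_pd[OF assms]
  note pd2 = has_C2_derivatives_pd_pd[OF assms]
  have "has_pd g"
    using assms unfolding has_pd_def pd1 has_C2_derivatives_def
    by (blast intro: has_derivative_imp_line_derivative)
  moreover have "has_pd (\<lambda>x. g' x v)" for v
    using assms has_derivative_imp_line_derivative[of "\<lambda>y. g' y v"]
    unfolding has_pd_def pd2 has_C2_derivatives_def by blast
  ultimately show ?thesis
    using assms has_C2_derivatives_continuous_on[OF assms]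
    unfolding C2_R4_def pd1 pd2 has_C2_derivatives_def by blast
qed

lemma continuous_on_UNIV_if_DERIV: "(\<And>s. DERIV P s :> P' s) \<Longrightarrow> continuous_on UNIV P"
  by (meson DERIV_isCont continuous_at_imp_continuous_on)

lemma has_C2_derivatives_compose:
  assumes g: "has_C2_derivatives g g' g''"
    and P: "\<And>s. DERIV P s :> P' s" "\<And>s. DERIV P' s :> P'' s" "continuous_on UNIV P''"
  shows "has_C2_derivatives (\<lambda>x. P (g x)) (\<lambda>x h. P' (g x) * g' x h)
           (\<lambda>x h k. P'' (g x) * g' x k * g' x h + P' (g x) * g'' x h k)"
proof -
  have g1: "\<And>x. (g has_derivative g' x) (at x)" and g2: "\<And>x h. ((\<lambda>y. g' y h) has_derivative g'' x h) (at x)"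
    and g3: "\<And>h k. continuous_on UNIV (\<lambda>x. g'' x h k)"
    using g unfolding has_C2_derivatives_def by auto
  have "((\<lambda>x. P (g x)) has_derivative (\<lambda>h. P' (g x) * g' x h)) (at x)" for x
    by (rule has_derivative_eq_rhs[OF DERIV_compose_FDERIV[OF P(1) g1]]) (simp add: fun_eq_iff)
  moreover have "((\<lambda>y. P' (g y) * g' y h) has_derivative
      (\<lambda>k. P'' (g x) * g' x k * g' x h + P' (g x) * g'' x h k)) (at x)" for x h
    by (rule has_derivative_eq_rhs[OF has_derivative_mult[OF DERIV_compose_FDERIV[OF P(2) g1] g2]])
       (simp add: fun_eq_iff algebra_simps)
  moreover have "continuous_on UNIV (\<lambda>x. P'' (g x) * g' x k * g' x h + P' (g x) * g'' x h k)" for h k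
    using continuous_on_compose2[OF continuous_on_UNIV_if_DERIV[OF P(2)]]
      continuous_on_compose2[OF P(3)] has_C2_derivatives_continuous_on[OF g] g3
    by (intro continuous_intros) auto
  ultimately show ?thesis unfolding has_C2_derivatives_def by blast
qed

lemma has_C2_derivatives_mult:
  assumes f: "has_C2_derivatives f f' f''" and g: "has_C2_derivatives g g' g''"
  shows "has_C2_derivatives (\<lambda>x. f x * g x) (\<lambda>x h. f x * g' x h + f' x h * g x)
     (\<lambda>x h k. f' x k * g' x h + f x * g'' x h k + f'' x h k * g x + f' x h * g' x k)"
proof -
  have f1: "\<And>x. (f has_derivative f' x) (at x)" and f2: "\<And>x h. ((\<lambda>y. f' y h) has_derivative f'' x h) (at x)"
    and f3: "\<And>h k. continuous_on UNIV (\<lambda>x. f'' x h k)"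
    using f unfolding has_C2_derivatives_def by auto
  have g1: "\<And>x. (g has_derivative g' x) (at x)" and g2: "\<And>x h. ((\<lambda>y. g' y h) has_derivative g'' x h) (at x)"
    and g3: "\<And>h k. continuous_on UNIV (\<lambda>x. g'' x h k)"
    using g unfolding has_C2_derivatives_def by auto
  have "((\<lambda>y. f y * g' y h + f' y h * g y) has_derivative
      (\<lambda>k. f' x k * g' x h + f x * g'' x h k + f'' x h k * g x + f' x h * g' x k)) (at x)" for x h
    by (rule has_derivative_eq_rhs[OF has_derivative_add[OF has_derivative_mult[OF f1 g2]
          has_derivative_mult[OF f2 g1]]])
       (simp add: fun_eq_iff algebra_simps)
  moreover have "continuous_on UNIV
      (\<lambda>x. f' x k * g' x h + f x * g'' x h k + f'' x h k * g x + f' x h * g' x k)" for h k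
    using has_C2_derivatives_continuous_on[OF f] has_C2_derivatives_continuous_on[OF g] f3 g3
    by (intro continuous_intros) auto
  ultimately show ?thesis
    unfolding has_C2_derivatives_def using has_derivative_mult[OF f1 g1] by blast
qed

lemma Ham_eq_projections:
  "Ham \<alpha> V x = (fst x ^ 2 + fst (snd (snd x)) ^ 2) / 2 + V (fst (snd x)) + V (snd (snd (snd x)))
     + \<alpha> / 2 * (fst (snd x) - snd (snd (snd x))) ^ 2"
  by (cases x) (simp add: Ham_def)

definition Ham_deriv :: "real \<Rightarrow> (real \<Rightarrow> real) \<Rightarrow> state \<Rightarrow> state \<Rightarrow> real" where
  "Ham_deriv \<alpha> V' x h = fst x * fst h + V' (fst (snd x)) * fst (snd h)
     + fst (snd (snd x)) * fst (snd (snd h)) + V' (snd (snd (snd x))) * snd (snd (snd h))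
     + \<alpha> * (fst (snd x) - snd (snd (snd x))) * (fst (snd h) - snd (snd (snd h)))"

definition Ham_deriv2 :: "real \<Rightarrow> (real \<Rightarrow> real) \<Rightarrow> state \<Rightarrow> state \<Rightarrow> state \<Rightarrow> real" where
  "Ham_deriv2 \<alpha> V'' x h k = fst k * fst h + V'' (fst (snd x)) * fst (snd k) * fst (snd h)
     + fst (snd (snd k)) * fst (snd (snd h)) + V'' (snd (snd (snd x))) * snd (snd (snd k)) * snd (snd (snd h))
     + \<alpha> * (fst (snd k) - snd (snd (snd k))) * (fst (snd h) - snd (snd (snd h)))"

lemma has_derivative_potential_terms:
  fixes V V' :: "real \<Rightarrow> real"
  assumes V: "\<And>s. DERIV V s :> V' s"
  shows "((\<lambda>x::state. V (fst (snd x))) has_derivative (\<lambda>h. V' (fst (snd x)) * fst (snd h))) (at x)"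
    and "((\<lambda>x::state. V (snd (snd (snd x)))) has_derivative (\<lambda>h. V' (snd (snd (snd x))) * snd (snd (snd h)))) (at x)"
  by (rule has_derivative_eq_rhs[OF DERIV_compose_FDERIV[OF V]], (rule derivative_intros)+,
      simp add: fun_eq_iff mult.commute)+

lemma has_C2_derivatives_Ham:
  assumes V: "\<And>s. DERIV V s :> V' s" "\<And>s. DERIV V' s :> V'' s" "continuous_on UNIV V''"
  shows "has_C2_derivatives (Ham \<alpha> V) (Ham_deriv \<alpha> V') (Ham_deriv2 \<alpha> V'')"
proof -
  have "(Ham \<alpha> V has_derivative Ham_deriv \<alpha> V' x) (at x)" for x
    unfolding Ham_eq_projections[abs_def]
    by (auto intro!: derivative_eq_intros has_derivative_potential_terms[OF V(1)]
        simp: fun_eq_iff Ham_deriv_def algebra_simps power2_eq_square)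
  moreover have "((\<lambda>y. Ham_deriv \<alpha> V' y h) has_derivative Ham_deriv2 \<alpha> V'' x h) (at x)" for x h
    unfolding Ham_deriv_def
    by (auto intro!: derivative_eq_intros has_derivative_potential_terms[OF V(2)]
        simp: fun_eq_iff Ham_deriv2_def algebra_simps)
  moreover have "continuous_on UNIV (\<lambda>x. Ham_deriv2 \<alpha> V'' x h k)" for h k
    unfolding Ham_deriv2_def by (intro continuous_intros continuous_on_compose2[OF V(3)]; auto)
  ultimately show ?thesis unfolding has_C2_derivatives_def by blast
qed

definition qsq :: "state \<Rightarrow> real" where
  "qsq x = fst (snd x) ^ 2 + snd (snd (snd x)) ^ 2"

lemma has_C2_derivatives_qsq:
  "has_C2_derivatives qsq (\<lambda>x h. 2 * fst (snd x) * fst (snd h) + 2 * snd (snd (snd x)) * snd (snd (snd h)))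
     (\<lambda>x h k. 2 * fst (snd k) * fst (snd h) + 2 * snd (snd (snd k)) * snd (snd (snd h)))"
  unfolding has_C2_derivatives_def qsq_def
  by (auto intro!: derivative_eq_intros simp: fun_eq_iff)

text \<open>\<open>L H\<close>, the carre du champ \<open>\<Gamma>(H)\<close>, and \<open>L |q|\<^sup>2 / 2\<close>; the generator of \<open>P(H) Q(|q|\<^sup>2)\<close> is
  expressed through these three functions because the mixed second-order terms vanish.\<close>

definition Ham_drift :: "real \<Rightarrow> real \<Rightarrow> real \<Rightarrow> state \<Rightarrow> real" where
  "Ham_drift \<gamma> T Tinf x = \<gamma> * (T + Tinf - fst x ^ 2)"

definition Ham_carre :: "real \<Rightarrow> real \<Rightarrow> real \<Rightarrow> state \<Rightarrow> real" where
  "Ham_carre \<gamma> T Tinf x = \<gamma> * (T * fst x ^ 2 + Tinf * fst (snd (snd x)) ^ 2)"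

definition momentum_dot_position :: "state \<Rightarrow> real" where
  "momentum_dot_position x = fst x * fst (snd x) + fst (snd (snd x)) * snd (snd (snd x))"

lemma gen_product:
  fixes \<alpha> \<gamma> T Tinf :: real
  assumes V: "\<And>s. DERIV V s :> V' s" "\<And>s. DERIV V' s :> V'' s" "continuous_on UNIV V''"
    and P: "\<And>s. DERIV P s :> P' s" "\<And>s. DERIV P' s :> P'' s" "continuous_on UNIV P''"
    and Q: "\<And>s. DERIV Q s :> Q' s" "\<And>s. DERIV Q' s :> Q'' s" "continuous_on UNIV Q''"
    and V'_eq: "V' = deriv V"
  defines "f \<equiv> \<lambda>x. P (Ham \<alpha> V x) * Q (qsq x)"
  shows "C2_R4 f"
    and "gen \<alpha> \<gamma> T Tinf V f x =
       Q (qsq x) * (P' (Ham \<alpha> V x) * Ham_drift \<gamma> T Tinf x + P'' (Ham \<alpha> V x) * Ham_carre \<gamma> T Tinf x)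
       + 2 * P (Ham \<alpha> V x) * Q' (qsq x) * momentum_dot_position x"
proof -
  note F = has_C2_derivatives_mult[OF has_C2_derivatives_compose[OF has_C2_derivatives_Ham[OF V, of \<alpha>] P]
      has_C2_derivatives_compose[OF has_C2_derivatives_qsq Q], folded f_def]
  show "C2_R4 f" by (rule has_C2_derivatives_imp_C2_R4[OF F])
  show "gen \<alpha> \<gamma> T Tinf V f x =
       Q (qsq x) * (P' (Ham \<alpha> V x) * Ham_drift \<gamma> T Tinf x + P'' (Ham \<alpha> V x) * Ham_carre \<gamma> T Tinf x)
       + 2 * P (Ham \<alpha> V x) * Q' (qsq x) * momentum_dot_position x"
    unfolding gen_def has_C2_derivatives_pd[OF F] has_C2_derivatives_pd_pd[OF F] V'_eq[symmetric]
    by (cases x) (simp add: e_p0_def e_q0_def e_p1_def e_q1_def qsq_def Ham_deriv_def Ham_deriv2_def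
        Ham_drift_def Ham_carre_def momentum_dot_position_def algebra_simps power2_eq_square)
qed

subsection \<open>Lower bounds for the potential and the Hamiltonian\<close>

lemma C2_real_DERIV:
  assumes "C2_real V"
  shows "\<And>s. DERIV V s :> deriv V s" and "\<And>s. DERIV (deriv V) s :> deriv (deriv V) s"
    and "continuous_on UNIV (deriv (deriv V))"
  using assms unfolding C2_real_def by (simp_all add: DERIV_deriv_iff_real_differentiable)

lemma continuous_on_Ham: "C2_real V \<Longrightarrow> continuous_on UNIV (Ham \<alpha> V)"
  by (rule has_C2_derivatives_continuous_on(1)[OF has_C2_derivatives_Ham[OF C2_real_DERIV]])

lemma admissible_V1_ge_leading_term:
  assumes "admissible_V1 k V1"
  obtains c B where "\<And>x. 1 < \<bar>x\<bar> \<Longrightarrow>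
    (if k = 0 then c else \<bar>x\<bar> powr (2*k) / (2*k)) - \<bar>B\<bar> * \<bar>x\<bar> powr (2*k - 1) \<le> V1 x"
proof -
  obtain c B where "\<forall>x. 1 < \<bar>x\<bar> \<longrightarrow> (\<forall>m::nat. m \<le> 2 \<longrightarrow>
      \<bar>(deriv ^^ m) (\<lambda>x. V1 x - (if k = 0 then c else \<bar>x\<bar> powr (2*k) / (2*k))) x\<bar>
        \<le> B * \<bar>x\<bar> powr (2*k - 1 - real m))"
    using assms unfolding admissible_V1_def Let_def by blast
  from this[rule_format, of _ 0]
  have "(if k = 0 then c else \<bar>x\<bar> powr (2*k) / (2*k)) - \<bar>B\<bar> * \<bar>x\<bar> powr (2*k - 1) \<le> V1 x"
    if "1 < \<bar>x\<bar>" for x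
    using that mult_right_mono[of B "\<bar>B\<bar>" "\<bar>x\<bar> powr (2*k - 1)"] by (force simp: abs_le_iff)
  then show thesis by (rule that)
qed

lemma admissible_V1_bounded_below_at_infinity:
  assumes "admissible_V1 k V1"
  shows "\<exists>K M. \<forall>x. K < \<bar>x\<bar> \<longrightarrow> - M \<le> V1 x"
proof -
  obtain c B where low: "\<And>x. 1 < \<bar>x\<bar> \<Longrightarrow>
      (if k = 0 then c else \<bar>x\<bar> powr (2*k) / (2*k)) - \<bar>B\<bar> * \<bar>x\<bar> powr (2*k - 1) \<le> V1 x"
    using admissible_V1_ge_leading_term[OF assms] by blast
  show ?thesis
  proof (cases "k \<le> 0")
    case True
    have "- (\<bar>c\<bar> + \<bar>1 / (2*k)\<bar> + \<bar>B\<bar>) \<le> V1 x" if x: "1 < \<bar>x\<bar>" for x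
    proof -
      have p1: "\<bar>x\<bar> powr (2*k - 1) \<le> 1" and p2: "\<bar>x\<bar> powr (2*k) \<le> 1"
        using True x powr_mono[of "2*k - 1" 0 "\<bar>x\<bar>"] powr_mono[of "2*k" 0 "\<bar>x\<bar>"] by (auto split: if_splits)
      have B: "\<bar>B\<bar> * \<bar>x\<bar> powr (2*k - 1) \<le> \<bar>B\<bar>"
        using p1 by (simp add: mult_left_le)
      have "- \<bar>c\<bar> - \<bar>1 / (2*k)\<bar> \<le> (if k = 0 then c else \<bar>x\<bar> powr (2*k) / (2*k))"
      proof (cases "k = 0")
        case False
        then have "1 / (2*k) \<le> \<bar>x\<bar> powr (2*k) / (2*k)"
          using True p2 by (intro divide_right_mono_neg) auto
        then show ?thesis
          unfolding if_not_P[OF False] using abs_ge_minus_self[of "1 / (2*k)"] by linarith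
      qed simp
      then show ?thesis using low[OF x] B by linarith
    qed
    then show ?thesis by blast
  next
    case False
    have "0 \<le> V1 x" if x: "max 1 (2*k*\<bar>B\<bar>) < \<bar>x\<bar>" for x
    proof -
      have "\<bar>x\<bar> powr (2*k) = \<bar>x\<bar> * \<bar>x\<bar> powr (2*k - 1)"
        using x powr_add[of "\<bar>x\<bar>" 1 "2*k - 1"] by simp
      then have "\<bar>x\<bar> powr (2*k) / (2*k) - \<bar>B\<bar> * \<bar>x\<bar> powr (2*k - 1)
          = \<bar>x\<bar> powr (2*k - 1) * (\<bar>x\<bar> / (2*k) - \<bar>B\<bar>)"
        by (simp add: algebra_simps)
      moreover have "\<bar>B\<bar> \<le> \<bar>x\<bar> / (2*k)" using x False by (simp add: le_divide_eq mult.commute)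
      then have "0 \<le> \<bar>x\<bar> powr (2*k - 1) * (\<bar>x\<bar> / (2*k) - \<bar>B\<bar>)" by (intro mult_nonneg_nonneg) auto
      moreover have "\<bar>x\<bar> powr (2*k) / (2*k) - \<bar>B\<bar> * \<bar>x\<bar> powr (2*k - 1) \<le> V1 x"
        using low[of x] x False by simp
      ultimately show ?thesis by linarith
    qed
    then show ?thesis by (intro exI[of _ "max 1 (2*k*\<bar>B\<bar>)"] exI[of _ 0]) auto
  qed
qed

lemma admissible_V1_bounded_below:
  assumes "admissible_V1 k V1"
  obtains M where "0 \<le> M" "\<And>x. - M \<le> V1 x"
proof -
  obtain K M where far: "\<And>x. K < \<bar>x\<bar> \<Longrightarrow> - M \<le> V1 x"
    using admissible_V1_bounded_below_at_infinity[OF assms] by blast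
  have "C2_real V1" using assms unfolding admissible_V1_def by blast
  then have "continuous_on UNIV V1" by (rule continuous_on_UNIV_if_DERIV[OF C2_real_DERIV(1)])
  then have "continuous_on {-\<bar>K\<bar>..\<bar>K\<bar>} V1" by (rule continuous_on_subset) simp
  moreover have "{-\<bar>K\<bar>..\<bar>K\<bar>} \<noteq> {}" by simp
  ultimately obtain z where z: "\<And>y. y \<in> {-\<bar>K\<bar>..\<bar>K\<bar>} \<Longrightarrow> V1 z \<le> V1 y"
    using continuous_attains_inf[OF compact_Icc] by blast
  have "- (\<bar>M\<bar> + \<bar>V1 z\<bar>) \<le> V1 x" for x
  proof (cases "K < \<bar>x\<bar>")
    case True
    then show ?thesis using far[of x] by linarith
  next
    case False
    then have "x \<in> {-\<bar>K\<bar>..\<bar>K\<bar>}" by auto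
    then show ?thesis using z[of x] by linarith
  qed
  then show ?thesis by (intro that[of "\<bar>M\<bar> + \<bar>V1 z\<bar>"]) auto
qed

lemma momenta_le_Ham:
  assumes "\<And>y. - M \<le> V1 y" and "0 \<le> \<alpha>"
  shows "fst x ^ 2 + fst (snd (snd x)) ^ 2 \<le> 2 * Ham \<alpha> V1 x + 4 * M"
  using assms(1)[of "fst (snd x)"] assms(1)[of "snd (snd (snd x))"]
    mult_nonneg_nonneg[OF assms(2) zero_le_power2[of "fst (snd x) - snd (snd (snd x))"]]
  unfolding Ham_eq_projections by (simp add: field_simps)

lemma norm_state_le:
  "norm (x::state) \<le> 1 + (fst x ^ 2 + fst (snd (snd x)) ^ 2) + qsq x"
proof -
  have "norm x \<le> 1 + norm x ^ 2"
  proof (cases "norm x \<le> 1")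
    case False
    then have "norm x * 1 \<le> norm x * norm x" by (intro mult_left_mono) auto
    then show ?thesis by (simp add: power2_eq_square)
  qed (use zero_le_power2[of "norm x"] in linarith)
  then show ?thesis by (cases x) (simp add: norm_Pair qsq_def)
qed

definition energy_cutoff :: "real \<Rightarrow> real \<Rightarrow> real \<Rightarrow> real" where
  "energy_cutoff b n h = exp (b * h) * smoothstep (h - n)"

definition energy_cutoff_d1 :: "real \<Rightarrow> real \<Rightarrow> real \<Rightarrow> real" where
  "energy_cutoff_d1 b n h = exp (b * h) * (b * smoothstep (h - n) + smoothstep_d1 (h - n))"

definition energy_cutoff_d2 :: "real \<Rightarrow> real \<Rightarrow> real \<Rightarrow> real" where
  "energy_cutoff_d2 b n h =
     exp (b * h) * (b^2 * smoothstep (h - n) + 2 * b * smoothstep_d1 (h - n) + smoothstep_d2 (h - n))"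

definition position_cutoff :: "real \<Rightarrow> real \<Rightarrow> real" where
  "position_cutoff r s = smoothstep (s / r - 1)"

definition position_cutoff_d1 :: "real \<Rightarrow> real \<Rightarrow> real" where
  "position_cutoff_d1 r s = smoothstep_d1 (s / r - 1) / r"

definition position_cutoff_d2 :: "real \<Rightarrow> real \<Rightarrow> real" where
  "position_cutoff_d2 r s = smoothstep_d2 (s / r - 1) / r / r"

lemmas smoothstep_chain = DERIV_chain'[OF _ DERIV_smoothstep] DERIV_chain'[OF _ DERIV_smoothstep_d1]

lemma continuous_on_smoothstep_compose:
  "continuous_on UNIV g \<Longrightarrow> continuous_on UNIV (\<lambda>x. smoothstep (g x))"
  "continuous_on UNIV g \<Longrightarrow> continuous_on UNIV (\<lambda>x. smoothstep_d1 (g x))"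
  "continuous_on UNIV g \<Longrightarrow> continuous_on UNIV (\<lambda>x. smoothstep_d2 (g x))"
  using continuous_on_compose2[OF continuous_on_UNIV_if_DERIV[OF DERIV_smoothstep]]
    continuous_on_compose2[OF continuous_on_UNIV_if_DERIV[OF DERIV_smoothstep_d1]]
    continuous_on_compose2[OF continuous_on_smoothstep_d2]
  by blast+

lemma DERIV_energy_cutoff:
  "DERIV (energy_cutoff b n) h :> energy_cutoff_d1 b n h"
  "DERIV (energy_cutoff_d1 b n) h :> energy_cutoff_d2 b n h"
  "continuous_on UNIV (energy_cutoff_d2 b n)"
  unfolding energy_cutoff_def[abs_def] energy_cutoff_d1_def[abs_def] energy_cutoff_d2_def[abs_def]
  by (rule derivative_eq_intros smoothstep_chain refl
      | simp add: algebra_simps power2_eq_square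
      | intro continuous_intros continuous_on_smoothstep_compose)+

lemma DERIV_position_cutoff:
  "DERIV (position_cutoff r) s :> position_cutoff_d1 r s"
  "DERIV (position_cutoff_d1 r) s :> position_cutoff_d2 r s"
  "continuous_on UNIV (position_cutoff_d2 r)"
proof -
  have d: "((\<lambda>s. s / r - 1) has_real_derivative 1 / r) (at s)"
    by (cases "r = 0") (auto intro!: derivative_eq_intros)
  show "DERIV (position_cutoff r) s :> position_cutoff_d1 r s"
    unfolding position_cutoff_def[abs_def] position_cutoff_d1_def using smoothstep_chain(1)[OF d] by simp
  show "DERIV (position_cutoff_d1 r) s :> position_cutoff_d2 r s"
    unfolding position_cutoff_d1_def[abs_def] position_cutoff_d2_def
    using DERIV_cdivide[OF smoothstep_chain(2)[OF d], of r] by simp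
  show "continuous_on UNIV (position_cutoff_d2 r)"
    unfolding position_cutoff_d2_def[abs_def] divide_inverse
    by (intro continuous_intros continuous_on_smoothstep_compose)
qed

lemma cutoff_test_fun:
  fixes \<alpha> \<gamma> T Tinf b n r :: real
  assumes V1: "admissible_V1 k V1" and M: "\<And>y. - M \<le> V1 y" and "0 \<le> \<alpha>" "0 < r"
  defines "f \<equiv> \<lambda>x. energy_cutoff b n (Ham \<alpha> V1 x) * position_cutoff r (qsq x)"
  shows "test_fun f"
    and "gen \<alpha> \<gamma> T Tinf V1 f x = position_cutoff r (qsq x) *
           (energy_cutoff_d1 b n (Ham \<alpha> V1 x) * Ham_drift \<gamma> T Tinf x
            + energy_cutoff_d2 b n (Ham \<alpha> V1 x) * Ham_carre \<gamma> T Tinf x)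
         + 2 * energy_cutoff b n (Ham \<alpha> V1 x) * position_cutoff_d1 r (qsq x) * momentum_dot_position x"
proof -
  have "C2_real V1" using V1 unfolding admissible_V1_def by blast
  note derivs = C2_real_DERIV[OF this] DERIV_energy_cutoff[of b n] DERIV_position_cutoff[of r] refl
  note C2 = gen_product(1)[OF derivs, of \<alpha>, folded f_def]
    and gen = gen_product(2)[OF derivs, of \<alpha> \<gamma> T Tinf, folded f_def]
  show "gen \<alpha> \<gamma> T Tinf V1 f x = position_cutoff r (qsq x) *
           (energy_cutoff_d1 b n (Ham \<alpha> V1 x) * Ham_drift \<gamma> T Tinf x
            + energy_cutoff_d2 b n (Ham \<alpha> V1 x) * Ham_carre \<gamma> T Tinf x)
         + 2 * energy_cutoff b n (Ham \<alpha> V1 x) * position_cutoff_d1 r (qsq x) * momentum_dot_position x"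
    by (rule gen)
  have "norm x \<le> 1 + (2 * (n + 1) + 4 * M) + 2 * r" if "f x \<noteq> 0" for x
  proof -
    have "Ham \<alpha> V1 x - n < 1" "qsq x / r - 1 < 1"
      using that smoothstep_eq_zero unfolding f_def energy_cutoff_def position_cutoff_def
      by (auto simp: not_le[symmetric])
    then show ?thesis
      using norm_state_le[of x] momenta_le_Ham[of M V1, OF M \<open>0 \<le> \<alpha>\<close>, of x] \<open>0 < r\<close>
      by (simp add: divide_less_eq)
  qed
  then have "bounded {x. f x \<noteq> 0}"
    unfolding bounded_iff by blast
  then show "test_fun f"
    unfolding test_fun_def using C2 by (simp add: compact_closure)
qed

subsection \<open>Pointwise estimates for the generator of the cut-off function\<close>

text \<open>This is where \<open>\<beta> > 1/T\<close> enters: for \<open>b T \<ge> 1\<close>,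
  \<open>L exp(b H) = b exp(b H) (L H + b \<Gamma>(H)) \<ge> b \<gamma> (T + T\<^sub>\<infinity>) exp(b H)\<close>.\<close>

lemma Ham_drift_plus_carre_ge:
  assumes "1 \<le> b * T" "0 \<le> b" "0 \<le> \<gamma>" "0 \<le> Tinf"
  shows "\<gamma> * (T + Tinf) \<le> Ham_drift \<gamma> T Tinf x + b * Ham_carre \<gamma> T Tinf x"
proof -
  have "Ham_drift \<gamma> T Tinf x + b * Ham_carre \<gamma> T Tinf x
      = \<gamma> * (T + Tinf) + \<gamma> * ((b * T - 1) * fst x ^ 2 + b * Tinf * fst (snd (snd x)) ^ 2)"
    by (simp add: Ham_drift_def Ham_carre_def algebra_simps)
  moreover have "0 \<le> \<gamma> * ((b * T - 1) * fst x ^ 2 + b * Tinf * fst (snd (snd x)) ^ 2)"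
    using assms by simp
  ultimately show ?thesis by linarith
qed

lemma gen_energy_cutoff_eq:
  "energy_cutoff_d1 b n h * Ham_drift \<gamma> T Tinf x + energy_cutoff_d2 b n h * Ham_carre \<gamma> T Tinf x
   = exp (b * h) * (smoothstep (h - n) * b * (Ham_drift \<gamma> T Tinf x + b * Ham_carre \<gamma> T Tinf x)
       + smoothstep_d1 (h - n) * (Ham_drift \<gamma> T Tinf x + 2 * b * Ham_carre \<gamma> T Tinf x)
       + smoothstep_d2 (h - n) * Ham_carre \<gamma> T Tinf x)"
  by (simp add: energy_cutoff_d1_def energy_cutoff_d2_def algebra_simps power2_eq_square)

lemma gen_energy_cutoff_ge_sublevel:
  assumes "h \<le> n" "1 \<le> b * T" "0 \<le> b" "0 \<le> \<gamma>" "0 \<le> Tinf"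
  shows "b * \<gamma> * (T + Tinf) * exp (b * h)
    \<le> energy_cutoff_d1 b n h * Ham_drift \<gamma> T Tinf x + energy_cutoff_d2 b n h * Ham_carre \<gamma> T Tinf x"
  using mult_left_mono[OF Ham_drift_plus_carre_ge[OF assms(2-5)], of "exp (b * h) * b"] assms(3)
  unfolding gen_energy_cutoff_eq using assms(1)
  by (simp add: smoothstep_eq_one smoothstep_d1_eq_zero smoothstep_d2_eq_zero algebra_simps)

lemma abs_Ham_drift_carre_le:
  assumes "0 \<le> \<gamma>" "0 \<le> T" "0 \<le> Tinf"
  shows "\<bar>Ham_drift \<gamma> T Tinf x\<bar> \<le> \<gamma> * (T + Tinf + 1) * (1 + fst x ^ 2 + fst (snd (snd x)) ^ 2)"
    and "\<bar>Ham_carre \<gamma> T Tinf x\<bar> \<le> \<gamma> * (T + Tinf + 1) * (1 + fst x ^ 2 + fst (snd (snd x)) ^ 2)"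
proof -
  let ?a = "fst x ^ 2" and ?c = "fst (snd (snd x)) ^ 2"
  have "\<bar>T + Tinf - ?a\<bar> \<le> (T + Tinf + 1) * (1 + ?a + ?c)" "\<bar>T * ?a + Tinf * ?c\<bar> \<le> (T + Tinf + 1) * (1 + ?a + ?c)"
    using assms mult_nonneg_nonneg[of T ?c] mult_nonneg_nonneg[of Tinf ?a]
      mult_nonneg_nonneg[of T ?a] mult_nonneg_nonneg[of Tinf ?c]
    by (simp_all add: abs_le_iff algebra_simps)
  then show "\<bar>Ham_drift \<gamma> T Tinf x\<bar> \<le> \<gamma> * (T + Tinf + 1) * (1 + ?a + ?c)"
    and "\<bar>Ham_carre \<gamma> T Tinf x\<bar> \<le> \<gamma> * (T + Tinf + 1) * (1 + ?a + ?c)"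
    unfolding Ham_drift_def Ham_carre_def using assms by (simp_all add: abs_mult mult.assoc mult_left_mono)
qed

lemma abs_smoothstep_derivative_terms_le:
  assumes "0 \<le> b" "0 \<le> \<gamma>" "0 \<le> T" "0 \<le> Tinf"
  shows "\<bar>smoothstep_d1 s * (Ham_drift \<gamma> T Tinf x + 2 * b * Ham_carre \<gamma> T Tinf x)
           + smoothstep_d2 s * Ham_carre \<gamma> T Tinf x\<bar>
    \<le> 360 * (2 + 2 * b) * (\<gamma> * (T + Tinf + 1) * (1 + fst x ^ 2 + fst (snd (snd x)) ^ 2))"
proof -
  define D G where "D = Ham_drift \<gamma> T Tinf x" and "G = Ham_carre \<gamma> T Tinf x"
  define Z where "Z = \<gamma> * (T + Tinf + 1) * (1 + fst x ^ 2 + fst (snd (snd x)) ^ 2)"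
  have DG: "\<bar>D\<bar> \<le> Z" "\<bar>G\<bar> \<le> Z"
    using abs_Ham_drift_carre_le[OF assms(2-4), of x] unfolding D_def G_def Z_def by auto
  have "\<bar>smoothstep_d1 s * (D + 2 * b * G) + smoothstep_d2 s * G\<bar>
      \<le> \<bar>smoothstep_d1 s\<bar> * \<bar>D + 2 * b * G\<bar> + \<bar>smoothstep_d2 s\<bar> * \<bar>G\<bar>"
    unfolding abs_mult[symmetric] by (rule abs_triangle_ineq)
  also have "\<dots> \<le> 360 * \<bar>D + 2 * b * G\<bar> + 360 * \<bar>G\<bar>"
    by (intro add_mono mult_right_mono abs_smoothstep_d1_le abs_smoothstep_d2_le abs_ge_zero)
  also have "\<dots> \<le> 360 * (2 + 2 * b) * Z"
    using DG \<open>0 \<le> b\<close> abs_triangle_ineq[of D "2 * b * G"] mult_left_mono[OF DG(2), of "2 * b"]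
    by (simp add: abs_mult algebra_simps)
  finally show ?thesis unfolding D_def G_def Z_def .
qed

lemma gen_energy_cutoff_ge_derivative_terms:
  assumes "1 \<le> b * T" "0 \<le> b" "0 \<le> \<gamma>" "0 < T" "0 \<le> Tinf"
  shows "exp (b * h) * (smoothstep_d1 (h - n) * (Ham_drift \<gamma> T Tinf x + 2 * b * Ham_carre \<gamma> T Tinf x)
           + smoothstep_d2 (h - n) * Ham_carre \<gamma> T Tinf x)
    \<le> energy_cutoff_d1 b n h * Ham_drift \<gamma> T Tinf x + energy_cutoff_d2 b n h * Ham_carre \<gamma> T Tinf x"
proof -
  have "0 \<le> \<gamma> * (T + Tinf)" using assms by simp
  then have "0 \<le> exp (b * h) * (smoothstep (h - n) * b * (Ham_drift \<gamma> T Tinf x + b * Ham_carre \<gamma> T Tinf x))"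
    using Ham_drift_plus_carre_ge[OF assms(1-3,5), of x] smoothstep_nonneg[of "h - n"] assms(2) by simp
  then show ?thesis
    unfolding gen_energy_cutoff_eq by (simp add: algebra_simps)
qed

lemma gen_energy_cutoff_ge:
  assumes Y: "fst x ^ 2 + fst (snd (snd x)) ^ 2 \<le> 2 * h + 4 * M"
    and "1 \<le> b * T" "0 \<le> b" "0 \<le> \<gamma>" "0 < T" "0 \<le> Tinf" "0 \<le> n" "0 \<le> M"
  shows "- (360 * (2 + 2 * b) * \<gamma> * (T + Tinf + 1) * (3 + 2 * n + 4 * M) * exp (b * (n + 1)))
    \<le> energy_cutoff_d1 b n h * Ham_drift \<gamma> T Tinf x + energy_cutoff_d2 b n h * Ham_carre \<gamma> T Tinf x"
    (is "- (?K * _) \<le> ?L")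
proof -
  define B where "B = smoothstep_d1 (h - n) * (Ham_drift \<gamma> T Tinf x + 2 * b * Ham_carre \<gamma> T Tinf x)
    + smoothstep_d2 (h - n) * Ham_carre \<gamma> T Tinf x"
  have L: "exp (b * h) * B \<le> ?L"
    unfolding B_def by (rule gen_energy_cutoff_ge_derivative_terms) (use assms in auto)
  have K: "0 \<le> ?K" using assms by simp
  show ?thesis
  proof (cases "h - n \<le> 0 \<or> 1 \<le> h - n")
    case True
    then have "B = 0" unfolding B_def by (simp add: smoothstep_d1_eq_zero smoothstep_d2_eq_zero)
    then have "0 \<le> ?L" using L by simp
    moreover have "0 \<le> ?K * exp (b * (n + 1))" using K by simp
    ultimately show ?thesis by linarith
  next
    case False
    have "\<bar>B\<bar> \<le> 360 * (2 + 2 * b) * (\<gamma> * (T + Tinf + 1) * (1 + fst x ^ 2 + fst (snd (snd x)) ^ 2))"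
      unfolding B_def by (rule abs_smoothstep_derivative_terms_le) (use assms in auto)
    also have "\<dots> \<le> ?K"
      using Y False assms by (simp only: mult.assoc, intro mult_left_mono) auto
    finally have "exp (b * h) * (- ?K) \<le> exp (b * h) * B"
      by (intro mult_left_mono) auto
    moreover have "exp (b * (n + 1)) * (- ?K) \<le> exp (b * h) * (- ?K)"
      using False K \<open>0 \<le> b\<close> by (intro mult_right_mono_neg) (auto intro: mult_left_mono)
    ultimately show ?thesis using L by (simp add: algebra_simps)
  qed
qed

lemma abs_mult_le_weighted_squares:
  fixes a q R :: real
  assumes "0 < R"
  shows "2 * \<bar>a * q\<bar> \<le> R * a^2 + q^2 / R"
proof -
  have "0 \<le> (R * \<bar>a\<bar> - \<bar>q\<bar>)^2 / R" using assms by simp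
  also have "\<dots> = R * a^2 + q^2 / R - 2 * \<bar>a * q\<bar>"
    using assms by (simp add: field_simps power2_eq_square abs_mult)
  finally show ?thesis by simp
qed

lemma abs_momentum_dot_position_le:
  assumes "0 < R"
  shows "2 * \<bar>momentum_dot_position x\<bar> \<le> R * (fst x ^ 2 + fst (snd (snd x)) ^ 2) + qsq x / R"
  using abs_mult_le_weighted_squares[OF assms, of "fst x" "fst (snd x)"]
    abs_mult_le_weighted_squares[OF assms, of "fst (snd (snd x))" "snd (snd (snd x))"]
    abs_triangle_ineq[of "fst x * fst (snd x)" "fst (snd (snd x)) * snd (snd (snd x))"]
  unfolding momentum_dot_position_def qsq_def by (simp add: algebra_simps add_divide_distrib)

lemma abs_cutoff_mixed_term_le:
  assumes Y: "fst x ^ 2 + fst (snd (snd x)) ^ 2 \<le> 2 * h + 4 * M"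
    and "0 < r" "0 \<le> b" "0 \<le> n" "0 \<le> M"
  shows "\<bar>2 * energy_cutoff b n h * position_cutoff_d1 r (qsq x) * momentum_dot_position x\<bar>
    \<le> 720 * exp (b * (n + 1)) * (n + 2 + 2 * M) / sqrt r"
proof (cases "h < n + 1 \<and> qsq x < 2 * r")
  case False
  then have "energy_cutoff b n h = 0 \<or> position_cutoff_d1 r (qsq x) = 0"
    using \<open>0 < r\<close> unfolding energy_cutoff_def position_cutoff_d1_def
    by (auto simp: smoothstep_eq_zero smoothstep_d1_eq_zero le_divide_eq)
  then show ?thesis using assms by auto
next
  case True
  define R where "R = sqrt r"
  have R: "0 < R" "R^2 = r" unfolding R_def using \<open>0 < r\<close> by auto
  have e: "\<bar>energy_cutoff b n h\<bar> \<le> exp (b * (n + 1))"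
    using True \<open>0 \<le> b\<close> smoothstep_nonneg[of "h - n"] smoothstep_le_one[of "h - n"]
    unfolding energy_cutoff_def abs_mult
    by (intro order_trans[OF mult_left_le]) (auto intro: mult_left_mono)
  have p: "\<bar>position_cutoff_d1 r (qsq x)\<bar> \<le> 360 / r"
    unfolding position_cutoff_d1_def using \<open>0 < r\<close> abs_smoothstep_d1_le by (simp add: divide_right_mono)
  have m: "2 * \<bar>momentum_dot_position x\<bar> \<le> R * (2 * (n + 1) + 4 * M) + 2 * R^2 / R"
    using abs_momentum_dot_position_le[OF R(1), of x] Y True R
    by (smt (verit) divide_right_mono mult_left_mono zero_le_power2)
  have "\<bar>2 * energy_cutoff b n h * position_cutoff_d1 r (qsq x) * momentum_dot_position x\<bar>
      = \<bar>energy_cutoff b n h\<bar> * \<bar>position_cutoff_d1 r (qsq x)\<bar> * (2 * \<bar>momentum_dot_position x\<bar>)"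
    by (simp add: abs_mult)
  also have "\<dots> \<le> exp (b * (n + 1)) * (360 / r) * (R * (2 * (n + 1) + 4 * M) + 2 * R^2 / R)"
    using e p m \<open>0 < r\<close> by (intro mult_mono) auto
  also have "\<dots> = 720 * exp (b * (n + 1)) * (n + 2 + 2 * M) / sqrt r"
    using R(1) unfolding R_def[symmetric] R(2)[symmetric] by (simp add: field_simps power2_eq_square)
  finally show ?thesis .
qed

lemma position_cutoff_bounds:
  assumes "0 < r"
  shows "0 \<le> position_cutoff r s" "position_cutoff r s \<le> 1" "s \<le> r \<Longrightarrow> position_cutoff r s = 1"
  unfolding position_cutoff_def using assms
  by (auto simp: smoothstep_nonneg smoothstep_le_one smoothstep_eq_one divide_le_eq)

lemma cutoff_energy_part_ge_sublevel:
  assumes Y: "fst x ^ 2 + fst (snd (snd x)) ^ 2 \<le> 2 * h + 4 * M" and "h \<le> n"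
    and "0 \<le> \<gamma>" "0 < T" "0 \<le> Tinf" "0 < b" "1 \<le> b * T" "0 < r"
  defines "c \<equiv> b * \<gamma> * (T + Tinf) * exp (- 2 * b * M)"
  shows "c - c * indicator {x. r < qsq x} x
    \<le> position_cutoff r (qsq x) *
       (energy_cutoff_d1 b n h * Ham_drift \<gamma> T Tinf x + energy_cutoff_d2 b n h * Ham_carre \<gamma> T Tinf x)"
    (is "_ \<le> ?\<Psi> * ?L")
proof -
  note \<Psi> = position_cutoff_bounds[OF \<open>0 < r\<close>, of "qsq x"]
  have "- 2 * b * M \<le> b * h"
    using Y \<open>0 < b\<close> mult_left_mono[of "- 2 * M" h b] zero_le_power2[of "fst x"]
      zero_le_power2[of "fst (snd (snd x))"] by (simp add: algebra_simps)
  then have "c \<le> b * \<gamma> * (T + Tinf) * exp (b * h)"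
    unfolding c_def using assms by (intro mult_left_mono) auto
  also have "\<dots> \<le> ?L"
    by (rule gen_energy_cutoff_ge_sublevel) (use assms in auto)
  finally have "c \<le> ?L" .
  moreover have "0 \<le> c" unfolding c_def using assms by simp
  ultimately show ?thesis
  proof (cases "r < qsq x")
    case False
    then show ?thesis using \<Psi> \<open>c \<le> ?L\<close> by simp
  qed (use \<Psi> in simp)
qed

lemma cutoff_energy_part_ge:
  assumes Y: "fst x ^ 2 + fst (snd (snd x)) ^ 2 \<le> 2 * h + 4 * M"
    and "0 \<le> \<gamma>" "0 < T" "0 \<le> Tinf" "0 < b" "1 \<le> b * T" "0 \<le> \<beta>" "0 \<le> n" "0 \<le> M" "0 < r"
  defines "c \<equiv> b * \<gamma> * (T + Tinf) * exp (- 2 * b * M)"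
    and "K \<equiv> 360 * (2 + 2 * b) * \<gamma> * (T + Tinf + 1) * (3 + 2 * n + 4 * M) * exp (b * (n + 1))"
  shows "c - c * indicator {x. r < qsq x} x - (c + K) * exp (- \<beta> * n) * exp (\<beta> * h)
    \<le> position_cutoff r (qsq x) *
       (energy_cutoff_d1 b n h * Ham_drift \<gamma> T Tinf x + energy_cutoff_d2 b n h * Ham_carre \<gamma> T Tinf x)"
    (is "_ \<le> ?\<Psi> * ?L")
proof -
  note \<Psi> = position_cutoff_bounds[OF \<open>0 < r\<close>, of "qsq x"]
  have "0 \<le> c" "0 \<le> K" unfolding c_def K_def using assms by auto
  show ?thesis
  proof (cases "h \<le> n")
    case True
    have "0 \<le> (c + K) * exp (- \<beta> * n) * exp (\<beta> * h)"
      using \<open>0 \<le> c\<close> \<open>0 \<le> K\<close> by simp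
    moreover have "c - c * indicator {x. r < qsq x} x \<le> ?\<Psi> * ?L"
      unfolding c_def by (rule cutoff_energy_part_ge_sublevel[OF Y True]) (use assms in auto)
    ultimately show ?thesis by linarith
  next
    case False
    have "- K \<le> ?L"
      unfolding K_def by (rule gen_energy_cutoff_ge[OF Y]) (use assms in auto)
    then have "?\<Psi> * (- K) \<le> ?\<Psi> * ?L" using \<Psi> by (intro mult_left_mono)
    moreover have "?\<Psi> * K \<le> K" using \<Psi> \<open>0 \<le> K\<close> by (intro mult_left_le_one_le)
    ultimately have "- K \<le> ?\<Psi> * ?L" by simp
    have "0 \<le> \<beta> * (h - n)" using False \<open>0 \<le> \<beta>\<close> by simp
    then have "1 \<le> exp (- \<beta> * n) * exp (\<beta> * h)"
      by (simp add: mult_exp_exp algebra_simps)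
    then have "c + K \<le> (c + K) * exp (- \<beta> * n) * exp (\<beta> * h)"
      using \<open>0 \<le> c\<close> \<open>0 \<le> K\<close> mult_left_mono[of 1 _ "c + K"] by (simp add: mult.assoc)
    moreover have "0 \<le> c * indicator {x. r < qsq x} x" using \<open>0 \<le> c\<close> by simp
    ultimately show ?thesis using \<open>- K \<le> ?\<Psi> * ?L\<close> by linarith
  qed
qed

lemma gen_cutoff_ge:
  fixes \<alpha> \<gamma> T Tinf b \<beta> n r M :: real
  assumes V1: "admissible_V1 k V1" and M: "\<And>y. - M \<le> V1 y" "0 \<le> M"
    and "0 \<le> \<alpha>" "0 \<le> \<gamma>" "0 < T" "0 \<le> Tinf" "0 < b" "1 \<le> b * T" "0 \<le> \<beta>" "0 \<le> n" "0 < r"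
  defines "f \<equiv> \<lambda>x. energy_cutoff b n (Ham \<alpha> V1 x) * position_cutoff r (qsq x)"
    and "c \<equiv> b * \<gamma> * (T + Tinf) * exp (- 2 * b * M)"
    and "K \<equiv> 360 * (2 + 2 * b) * \<gamma> * (T + Tinf + 1) * (3 + 2 * n + 4 * M) * exp (b * (n + 1))"
  shows "test_fun f"
    and "c - c * indicator {x. r < qsq x} x - (c + K) * exp (- \<beta> * n) * exp (\<beta> * Ham \<alpha> V1 x)
           - 720 * exp (b * (n + 1)) * (n + 2 + 2 * M) / sqrt r \<le> gen \<alpha> \<gamma> T Tinf V1 f x"
proof -
  show "test_fun f"
    unfolding f_def by (rule cutoff_test_fun(1)[OF V1 M(1) \<open>0 \<le> \<alpha>\<close> \<open>0 < r\<close>])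
  have Y: "fst x ^ 2 + fst (snd (snd x)) ^ 2 \<le> 2 * Ham \<alpha> V1 x + 4 * M"
    by (rule momenta_le_Ham[of M V1, OF M(1) \<open>0 \<le> \<alpha>\<close>])
  show "c - c * indicator {x. r < qsq x} x - (c + K) * exp (- \<beta> * n) * exp (\<beta> * Ham \<alpha> V1 x)
           - 720 * exp (b * (n + 1)) * (n + 2 + 2 * M) / sqrt r \<le> gen \<alpha> \<gamma> T Tinf V1 f x"
    unfolding f_def cutoff_test_fun(2)[OF V1 M(1) \<open>0 \<le> \<alpha>\<close> \<open>0 < r\<close>] c_def K_def
    using cutoff_energy_part_ge[OF Y, of \<gamma> T Tinf b \<beta> n r] abs_cutoff_mixed_term_le[OF Y, of r b n] assms
    by (smt (verit))
qed

lemma tendsto_affine_mult_exp_neg: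
  fixes A B d :: real
  assumes "0 < d"
  shows "((\<lambda>x. (A + B * x) * exp (- (d * x))) \<longlongrightarrow> 0) at_top"
  using assms by real_asymp

lemma cutoff_weight_tendsto_zero:
  fixes b \<beta> c \<kappa> M :: real
  assumes "0 < b" "b < \<beta>"
  shows "((\<lambda>n. (c + \<kappa> * (3 + 2 * n + 4 * M) * exp (b * (n + 1))) * exp (- \<beta> * n)) \<longlongrightarrow> 0) at_top"
proof -
  have "((\<lambda>n. (c + 0 * n) * exp (- (\<beta> * n))
          + (\<kappa> * exp b * (3 + 4 * M) + 2 * \<kappa> * exp b * n) * exp (- ((\<beta> - b) * n))) \<longlongrightarrow> 0 + 0) at_top"
    using assms by (intro tendsto_add tendsto_affine_mult_exp_neg) auto
  moreover have "(\<lambda>n. (c + \<kappa> * (3 + 2 * n + 4 * M) * exp (b * (n + 1))) * exp (- \<beta> * n))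
      = (\<lambda>n. (c + 0 * n) * exp (- (\<beta> * n))
          + (\<kappa> * exp b * (3 + 4 * M) + 2 * \<kappa> * exp b * n) * exp (- ((\<beta> - b) * n)))"
  proof
    fix n :: real
    have "exp (b * (n + 1)) * exp (- \<beta> * n) = exp b * exp (- ((\<beta> - b) * n))"
      by (simp only: mult_exp_exp) (simp add: algebra_simps)
    then have "(c + \<kappa> * (3 + 2 * n + 4 * M) * exp (b * (n + 1))) * exp (- \<beta> * n)
        = c * exp (- \<beta> * n) + \<kappa> * ((3 + 2 * n + 4 * M) * (exp b * exp (- ((\<beta> - b) * n))))"
      by (simp only: distrib_right mult.assoc)
    then show "(c + \<kappa> * (3 + 2 * n + 4 * M) * exp (b * (n + 1))) * exp (- \<beta> * n)
        = (c + 0 * n) * exp (- (\<beta> * n))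
          + (\<kappa> * exp b * (3 + 4 * M) + 2 * \<kappa> * exp b * n) * exp (- ((\<beta> - b) * n))"
      by (simp add: algebra_simps)
  qed
  ultimately show ?thesis by simp
qed

lemma invariant_prob_cutoff_family:
  assumes V1: "admissible_V1 k V1" and inv: "invariant_prob \<alpha> \<gamma> T Tinf V1 \<mu>"
    and "0 < \<alpha>" "0 < \<gamma>" "0 < T" "0 < Tinf" "1 / T < \<beta>"
  obtains c :: real and C E :: "real \<Rightarrow> real" where "0 < c" "(C \<longlongrightarrow> 0) at_top"
    and "\<And>n r. 0 \<le> n \<Longrightarrow> 0 < r \<Longrightarrow> \<exists>h. integrable \<mu> h \<and> (\<integral>x. h x \<partial>\<mu>) = 0 \<and> (\<forall>x\<in>space \<mu>.
       c - c * indicator {x. r < qsq x} x - C n * exp (\<beta> * Ham \<alpha> V1 x) - E n / sqrt r \<le> h x)"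
proof -
  obtain M where M: "0 \<le> M" "\<And>y. - M \<le> V1 y" using admissible_V1_bounded_below[OF V1] by blast
  define b where "b = 1 / T"
  have b: "0 < b" "1 \<le> b * T" "b < \<beta>" using assms unfolding b_def by auto
  define c where "c = b * \<gamma> * (T + Tinf) * exp (- 2 * b * M)"
  define \<kappa> where "\<kappa> = 360 * (2 + 2 * b) * \<gamma> * (T + Tinf + 1)"
  define C where "C n = (c + \<kappa> * (3 + 2 * n + 4 * M) * exp (b * (n + 1))) * exp (- \<beta> * n)" for n
  have c: "0 < c" unfolding c_def using b assms by simp
  have "\<exists>h. integrable \<mu> h \<and> (\<integral>x. h x \<partial>\<mu>) = 0 \<and> (\<forall>x\<in>space \<mu>.
       c - c * indicator {x. r < qsq x} x - C n * exp (\<beta> * Ham \<alpha> V1 x)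
         - 720 * exp (b * (n + 1)) * (n + 2 + 2 * M) / sqrt r \<le> h x)"
    if "0 \<le> n" "0 < r" for n r
  proof -
    have pos: "0 \<le> \<alpha>" "0 \<le> \<gamma>" "0 \<le> Tinf" "0 \<le> \<beta>" using assms b by auto
    note f = gen_cutoff_ge[OF V1 M(2,1) pos(1,2) \<open>0 < T\<close> pos(3) b(1,2) pos(4) that]
    from f(1) inv have "integrable \<mu> (gen \<alpha> \<gamma> T Tinf V1 (\<lambda>x. energy_cutoff b n (Ham \<alpha> V1 x) * position_cutoff r (qsq x)))"
      "(\<integral>x. gen \<alpha> \<gamma> T Tinf V1 (\<lambda>x. energy_cutoff b n (Ham \<alpha> V1 x) * position_cutoff r (qsq x)) x \<partial>\<mu>) = 0"
      unfolding invariant_prob_def by auto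
    with f(2) show ?thesis unfolding c_def C_def \<kappa>_def by blast
  qed
  with c cutoff_weight_tendsto_zero[OF b(1,3)] show thesis
    unfolding C_def[abs_def] by (rule that)
qed

subsection \<open>Integration against the invariant measure\<close>

lemma borel_measurable_continuous_on_sets_eq:
  fixes f :: "'a::topological_space \<Rightarrow> 'b::topological_space"
  assumes "sets M = sets borel" "continuous_on UNIV f"
  shows "f \<in> borel_measurable M"
  using borel_measurable_continuous_onI[OF assms(2)] measurable_cong_sets[OF assms(1) refl] by blast

lemma (in prob_space) zero_mean_lower_bound:
  fixes g h :: "'a \<Rightarrow> real"
  assumes "A \<in> events" "integrable M g" "integrable M h" "expectation h = 0"
    and lower: "\<And>x. x \<in> space M \<Longrightarrow> c - c * indicator A x - C * g x - e \<le> h x"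
  shows "c - c * prob A - C * expectation g - e \<le> 0"
proof -
  have i1: "integrable M (\<lambda>x. c * indicator A x :: real)"
    using assms(1) by (intro integrable_mult_right integrable_real_indicator) (auto simp: emeasure_eq_measure)
  have i2: "integrable M (\<lambda>x. C * g x)" using assms(2) by simp
  have int: "integrable M (\<lambda>x. c - c * indicator A x - C * g x - e)"
    using i1 i2 by (intro Bochner_Integration.integrable_diff) auto
  have "expectation (\<lambda>x. c - c * indicator A x - C * g x - e) \<le> expectation h"
    using int assms(3) lower by (rule integral_mono)
  moreover have "expectation (\<lambda>x. c - c * indicator A x - C * g x - e) = c - c * prob A - C * expectation g - e"
    using i1 i2 assms(1) prob_space by simp
  ultimately show ?thesis using assms(4) by simp
qed

lemma (in finite_measure) tendsto_measure_superlevel_zero: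
  assumes "S \<in> borel_measurable M"
  shows "((\<lambda>i. measure M {x \<in> space M. real i < S x}) \<longlongrightarrow> 0) sequentially"
proof -
  have "(\<Inter>i. {x \<in> space M. real i < S x}) = {}"
    by auto (meson less_asym reals_Archimedean2)
  moreover have "{x \<in> space M. real i < S x} \<in> sets M" for i
    using assms by measurable
  moreover have "decseq (\<lambda>i. {x \<in> space M. real i < S x})"
    by (auto simp: decseq_def intro: le_less_trans)
  ultimately show ?thesis
    using finite_Lim_measure_decseq[of "\<lambda>i. {x \<in> space M. real i < S x}"] by auto
qed

lemma (in prob_space) zero_mean_family_absurd:
  fixes S g :: "'a \<Rightarrow> real" and C E :: "real \<Rightarrow> real"
  assumes S: "S \<in> borel_measurable M" and g: "integrable M g" and "0 < c" and C: "(C \<longlongrightarrow> 0) at_top"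
    and family: "\<And>n r. 0 \<le> n \<Longrightarrow> 0 < r \<Longrightarrow> \<exists>h. integrable M h \<and> expectation h = 0 \<and>
       (\<forall>x\<in>space M. c - c * indicator {x. r < S x} x - C n * g x - E n / sqrt r \<le> h x)"
  shows False
proof -
  have "\<forall>\<^sub>F n in at_top. 0 \<le> n \<and> C n * expectation g < c / 4"
    using order_tendstoD(2)[OF tendsto_mult_left_zero[OF C], of "c / 4" "expectation g"] \<open>0 < c\<close>
    by (intro eventually_conj eventually_ge_at_top) auto
  then obtain n where n: "0 \<le> n" "C n * expectation g < c / 4"
    by (auto simp: eventually_at_top_linorder)
  have "((\<lambda>i. E n / sqrt (real i)) \<longlongrightarrow> 0) sequentially" by real_asymp
  then have "\<forall>\<^sub>F i in sequentially. 0 < i \<and> prob {x \<in> space M. real i < S x} < 1 / 4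
      \<and> E n / sqrt (real i) < c / 4"
    using tendsto_measure_superlevel_zero[OF S] \<open>0 < c\<close>
    by (intro eventually_conj eventually_gt_at_top order_tendstoD(2)) auto
  then obtain i :: nat where i: "0 < i" "prob {x \<in> space M. real i < S x} < 1 / 4"
    "E n / sqrt (real i) < c / 4"
    by (auto simp: eventually_sequentially)
  then obtain h where h: "integrable M h" "expectation h = 0"
    "\<And>x. x \<in> space M \<Longrightarrow> c - c * indicator {x. real i < S x} x - C n * g x - E n / sqrt (real i) \<le> h x"
    using family[OF n(1), of "real i"] by auto
  have "c - c * prob {x \<in> space M. real i < S x} - C n * expectation g - E n / sqrt (real i) \<le> 0"
    using h(3) by (intro zero_mean_lower_bound[OF _ g h(1,2)]) (use S in \<open>auto simp: indicator_def\<close>)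
  moreover have "c * prob {x \<in> space M. real i < S x} < c * (1 / 4)"
    using i(2) \<open>0 < c\<close> by (intro mult_strict_left_mono)
  ultimately show False using n i \<open>0 < c\<close> by linarith
qed

lemma integrable_exp_Ham:
  assumes "sets \<mu> = sets borel" "C2_real V" "(\<integral>\<^sup>+ x. ennreal (exp (\<beta> * Ham \<alpha> V x)) \<partial>\<mu>) \<noteq> \<infinity>"
  shows "integrable \<mu> (\<lambda>x. exp (\<beta> * Ham \<alpha> V x))"
  using assms(3) continuous_on_Ham[OF assms(2)]
  by (intro integrableI_bounded borel_measurable_continuous_on_sets_eq[OF assms(1)] continuous_intros)
     (auto simp: top.not_eq_extremum)

theorem proposition5p1:
  fixes \<alpha> \<gamma> T Tinf k \<beta> :: real and V1 :: "real \<Rightarrow> real" and \<mu> :: "state measure"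
  assumes "\<alpha> > 0" "\<gamma> > 0" "T > 0" "Tinf > 0"
    and "admissible_V1 k V1"
    and "invariant_prob \<alpha> \<gamma> T Tinf V1 \<mu>"
    and "\<beta> > 1 / T"
  shows "(\<integral>\<^sup>+ x. ennreal (exp (\<beta> * Ham \<alpha> V1 x)) \<partial>\<mu>) = \<infinity>"
proof (rule ccontr)
  assume finite: "(\<integral>\<^sup>+ x. ennreal (exp (\<beta> * Ham \<alpha> V1 x)) \<partial>\<mu>) \<noteq> \<infinity>"
  have \<mu>: "prob_space \<mu>" "sets \<mu> = sets borel"
    using assms(6) unfolding invariant_prob_def by auto
  have "C2_real V1" using assms(5) unfolding admissible_V1_def by blast
  have "qsq \<in> borel_measurable \<mu>"
    by (rule borel_measurable_continuous_on_sets_eq[OF \<mu>(2)]) (simp add: qsq_def continuous_intros)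
  moreover have "integrable \<mu> (\<lambda>x. exp (\<beta> * Ham \<alpha> V1 x))"
    using \<mu>(2) \<open>C2_real V1\<close> finite by (rule integrable_exp_Ham)
  moreover obtain c :: real and C E :: "real \<Rightarrow> real" where "0 < c" "(C \<longlongrightarrow> 0) at_top"
    and "\<And>n r. 0 \<le> n \<Longrightarrow> 0 < r \<Longrightarrow> \<exists>h. integrable \<mu> h \<and> (\<integral>x. h x \<partial>\<mu>) = 0 \<and> (\<forall>x\<in>space \<mu>.
       c - c * indicator {x. r < qsq x} x - C n * exp (\<beta> * Ham \<alpha> V1 x) - E n / sqrt r \<le> h x)"
    using invariant_prob_cutoff_family[OF assms(5,6,1-4,7)] by metis
  ultimately show False
    by (rule prob_space.zero_mean_family_absurd[OF \<mu>(1)])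
qed

end
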